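(* (Equivalent form of the basic scheme.) Let $u:P\to\mathbb{R}^3$ be a $\Lambda$-periodic field whose Fourier transform satisfies $\hat u(0)=\hat u((\pi,\pi,\pi))=0$, and let $\sigma^{(m)},\tau^{(m)}$ ($m=1,2$) be computed from $u$. Then for every $q\in\mathcal{Q}_N$, $$\Omega(q)\cdot\big\{-\hat\tau^{(1)}(q)\cdot\overline{D(q)}+\hat\tau^{(2)}(q)\cdot D(q)\big\}=\hat u(q)-\Omega(q)\cdot\big\{\hat\sigma^{(1)}(q)\cdot\overline{D(q)}-\hat\sigma^{(2)}(q)\cdot D(q)\big\}.$$ Equivalently, for every $q\in\mathcal{Q}_N$ and every $v\in\mathbb{C}^3$ with $v=0$ when $D(q)=0$: $\Omega(q)\cdot\big\{(\lambda^0:(D(q)\otimes_s v))\cdot\overline{D(q)}+(\lambda^0:(\overline{D(q)}\otimes_s v))\cdot D(q)\big\}=v$.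
   Context: Setting: $N_1,N_2,N_3$ even, $N=N_1N_2N_3$, $\Lambda=N_1\mathbb{Z}\times N_2\mathbb{Z}\times N_3\mathbb{Z}$; strain grid $S=\mathbb{Z}^3$, displacement grid $P=(\tfrac12,\tfrac12,\tfrac12)+\mathbb{Z}^3$, fields $\Lambda$-periodic, sums over one period. $\hat f(q)=\frac1N\sum_r f(r)e^{-iq\cdot r}$, $q\in\mathcal{Q}_N=\{(2\pi h_1/N_1,2\pi h_2/N_2,2\pi h_3/N_3):0\le h_i\le N_i-1\}$. $T=\{\tfrac12(1,1,1),\tfrac12(1,-1,-1),\tfrac12(-1,1,-1),\tfrac12(-1,-1,1)\}$, $D_i(q)=\sum_{e\in T}e_ie^{iq\cdot e}$. For scalar $f$ on $P$, $r\in S$: $D^+_i[f](r)=\sum_{e\in T}e_if(r+e)$, $D^-_i[f](r)=-\sum_{e\in T}e_if(r-e)$. $\delta\epsilon^{(m)}_{ij}=\frac12(D^{\pm}_i[u_j]+D^{\pm}_j[u_i])$ ($+$ for $m=1$, $-$ for $m=2$), $\epsilon^{(m)}=\bar\epsilon+\delta\epsilon^{(m)}$ ($\bar\epsilon$ fixed symmetric), $\sigma^{(m)}=\lambda(r):(\epsilon^{(m)}-\epsilon^0(r))$ with periodic stiffness $\lambda(r)$ (minor and major symmetries) and periodic symmetric eigenstrain $\epsilon^0$; $\tau^{(m)}=\sigma^{(m)}-\lambda^0:\epsilon^{(m)}$ with $\lambda^0$ constant, with minor and major symmetries, positive definite on symmetric matrices. $M_{jk}(q)=\sum_{i,l}\lambda^0_{ijkl}(\overline{D_i}D_l+D_i\overline{D_l})(q)$;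 $\Omega(q)=M(q)^{-1}$ if $D(q)\ne0$ and $\Omega(q)=0$ otherwise. Notation: $(a\otimes_s b)_{ij}=\frac12(a_ib_j+a_jb_i)$, $(\sigma\cdot v)_i=\sum_j\sigma_{ij}v_j$, $(\lambda:\xi)_{ij}=\sum_{kl}\lambda_{ijkl}\xi_{kl}$, overline = complex conjugation. *)

theory Defs
  imports "HOL-Analysis.Analysis"
begin

type_synonym tensor4 = "3 \<Rightarrow> 3 \<Rightarrow> 3 \<Rightarrow> 3 \<Rightarrow> real"

definition Tset :: "(real^3) set" where
  "Tset = {vector [1/2, 1/2, 1/2], vector [1/2, -1/2, -1/2],
           vector [-1/2, 1/2, -1/2], vector [-1/2, -1/2, 1/2]}"

text \<open>Strain grid S = Z^3 and displacement grid P = (1/2,1/2,1/2) + Z^3.\<close>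
definition Sgrid :: "(real^3) set" where
  "Sgrid = {r. \<forall>i. r $ i \<in> \<int>}"

definition Pgrid :: "(real^3) set" where
  "Pgrid = {r. \<forall>i. r $ i - 1/2 \<in> \<int>}"

definition period_box :: "(real^3) set \<Rightarrow> nat \<Rightarrow> nat \<Rightarrow> nat \<Rightarrow> (real^3) set" where
  "period_box G N1 N2 N3 = {r \<in> G. 0 \<le> r $ 1 \<and> r $ 1 < real N1 \<and> 0 \<le> r $ 2 \<and> r $ 2 < real N2
                                 \<and> 0 \<le> r $ 3 \<and> r $ 3 < real N3}"

definition lattice_periodic_on :: "(real^3) set \<Rightarrow> nat \<Rightarrow> nat \<Rightarrow> nat \<Rightarrow> (real^3 \<Rightarrow> 'a) \<Rightarrow> bool" where
  "lattice_periodic_on G N1 N2 N3 f \<longleftrightarrow>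
     (\<forall>r\<in>G. f (r + vector [real N1, 0, 0]) = f r \<and> f (r + vector [0, real N2, 0]) = f r
            \<and> f (r + vector [0, 0, real N3]) = f r)"

definition dft :: "(real^3) set \<Rightarrow> nat \<Rightarrow> nat \<Rightarrow> nat \<Rightarrow> (real^3 \<Rightarrow> complex) \<Rightarrow> real^3 \<Rightarrow> complex" where
  "dft G N1 N2 N3 f q = (1 / of_nat (N1 * N2 * N3)) *
      (\<Sum>r\<in>period_box G N1 N2 N3. f r * exp (- \<i> * complex_of_real (q \<bullet> r)))"

definition dft_vec :: "(real^3) set \<Rightarrow> nat \<Rightarrow> nat \<Rightarrow> nat \<Rightarrow> (real^3 \<Rightarrow> real^3) \<Rightarrow> real^3 \<Rightarrow> complex^3" where
  "dft_vec G N1 N2 N3 f q = (\<chi> i. dft G N1 N2 N3 (\<lambda>r. complex_of_real (f r $ i)) q)"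

definition dft_mat :: "(real^3) set \<Rightarrow> nat \<Rightarrow> nat \<Rightarrow> nat \<Rightarrow> (real^3 \<Rightarrow> real^3^3) \<Rightarrow> real^3 \<Rightarrow> complex^3^3" where
  "dft_mat G N1 N2 N3 f q = (\<chi> i j. dft G N1 N2 N3 (\<lambda>r. complex_of_real (f r $ i $ j)) q)"

definition QN :: "nat \<Rightarrow> nat \<Rightarrow> nat \<Rightarrow> (real^3) set" where
  "QN N1 N2 N3 = {vector [2 * pi * real h1 / real N1, 2 * pi * real h2 / real N2, 2 * pi * real h3 / real N3]
                  | h1 h2 h3. h1 < N1 \<and> h2 < N2 \<and> h3 < N3}"

definition Dq :: "real^3 \<Rightarrow> complex^3" where
  "Dq q = (\<chi> i. \<Sum>e\<in>Tset. complex_of_real (e $ i) * exp (\<i> * complex_of_real (q \<bullet> e)))"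

definition cvec :: "complex^3 \<Rightarrow> complex^3" where
  "cvec v = (\<chi> i. cnj (v $ i))"

definition Dplus :: "(real^3 \<Rightarrow> real) \<Rightarrow> real^3 \<Rightarrow> 3 \<Rightarrow> real" where
  "Dplus f r i = (\<Sum>e\<in>Tset. e $ i * f (r + e))"

definition Dminus :: "(real^3 \<Rightarrow> real) \<Rightarrow> real^3 \<Rightarrow> 3 \<Rightarrow> real" where
  "Dminus f r i = - (\<Sum>e\<in>Tset. e $ i * f (r - e))"

definition Dpm :: "nat \<Rightarrow> (real^3 \<Rightarrow> real) \<Rightarrow> real^3 \<Rightarrow> 3 \<Rightarrow> real" where
  "Dpm m = (if m = 1 then Dplus else Dminus)"

definition deps :: "nat \<Rightarrow> (real^3 \<Rightarrow> real^3) \<Rightarrow> real^3 \<Rightarrow> real^3^3" where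
  "deps m u r = (\<chi> i j. (1/2) * (Dpm m (\<lambda>p. u p $ j) r i + Dpm m (\<lambda>p. u p $ i) r j))"

definition epsm :: "nat \<Rightarrow> real^3^3 \<Rightarrow> (real^3 \<Rightarrow> real^3) \<Rightarrow> real^3 \<Rightarrow> real^3^3" where
  "epsm m ebar u r = ebar + deps m u r"

definition contr :: "(3 \<Rightarrow> 3 \<Rightarrow> 3 \<Rightarrow> 3 \<Rightarrow> 'a::comm_semiring_1) \<Rightarrow> 'a^3^3 \<Rightarrow> 'a^3^3" where
  "contr L xi = (\<chi> i j. \<Sum>k\<in>UNIV. \<Sum>l\<in>UNIV. L i j k l * xi $ k $ l)"

definition ctensor :: "tensor4 \<Rightarrow> (3 \<Rightarrow> 3 \<Rightarrow> 3 \<Rightarrow> 3 \<Rightarrow> complex)" where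
  "ctensor L = (\<lambda>i j k l. complex_of_real (L i j k l))"

definition sigm :: "nat \<Rightarrow> (real^3 \<Rightarrow> tensor4) \<Rightarrow> (real^3 \<Rightarrow> real^3^3) \<Rightarrow> real^3^3
                    \<Rightarrow> (real^3 \<Rightarrow> real^3) \<Rightarrow> real^3 \<Rightarrow> real^3^3" where
  "sigm m lam eps0 ebar u r = contr (lam r) (epsm m ebar u r - eps0 r)"

definition taum :: "nat \<Rightarrow> (real^3 \<Rightarrow> tensor4) \<Rightarrow> tensor4 \<Rightarrow> (real^3 \<Rightarrow> real^3^3) \<Rightarrow> real^3^3
                    \<Rightarrow> (real^3 \<Rightarrow> real^3) \<Rightarrow> real^3 \<Rightarrow> real^3^3" where
  "taum m lam lam0 eps0 ebar u r = sigm m lam eps0 ebar u r - contr lam0 (epsm m ebar u r)"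

definition Mq :: "tensor4 \<Rightarrow> real^3 \<Rightarrow> complex^3^3" where
  "Mq lam0 q = (\<chi> j k. \<Sum>i\<in>UNIV. \<Sum>l\<in>UNIV. complex_of_real (lam0 i j k l) *
       (cnj (Dq q $ i) * Dq q $ l + Dq q $ i * cnj (Dq q $ l)))"

definition Omega :: "tensor4 \<Rightarrow> real^3 \<Rightarrow> complex^3^3" where
  "Omega lam0 q = (if Dq q \<noteq> 0 then matrix_inv (Mq lam0 q) else 0)"

definition symprod :: "complex^3 \<Rightarrow> complex^3 \<Rightarrow> complex^3^3" where
  "symprod a b = (\<chi> i j. (a $ i * b $ j + a $ j * b $ i) / 2)"

definition minor_major_sym :: "tensor4 \<Rightarrow> bool" where
  "minor_major_sym L \<longleftrightarrow> (\<forall>i j k l. L i j k l = L j i k l \<and> L i j k l = L i j l k \<and> L i j k l = L k l i j)"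

definition pos_def_sym :: "tensor4 \<Rightarrow> bool" where
  "pos_def_sym L \<longleftrightarrow> (\<forall>xi::real^3^3. transpose xi = xi \<and> xi \<noteq> 0 \<longrightarrow>
      (\<Sum>i\<in>UNIV. \<Sum>j\<in>UNIV. \<Sum>k\<in>UNIV. \<Sum>l\<in>UNIV. xi $ i $ j * L i j k l * xi $ k $ l) > 0)"

end

theory Submission
  imports Defs
begin

text \<open>
  Write U(q) for the transform of u. Under the DFT the difference operators are diagonalised: the
  strain fields transform into the symmetrised products D(q) \<otimes> U(q) and -conj D(q) \<otimes> U(q), and
  the constant mean strain is invisible at q \<noteq> 0. Subtracting the \<sigma>-terms therefore leaves \<Omega>(q)
  applied to M(q) U(q), where M(q) is the acoustic tensor of \<lambda>0 along D(q). It is invertible: for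
  w in its kernel, w* M w is the sum of the \<lambda>0-energies of the complex strains D \<otimes> w and
  conj D \<otimes> w, which by positive definiteness vanish only for w = 0. On Q_N, D(q) = 0 only at
  q = 0 and q = (\<pi>,\<pi>,\<pi>), where U(q) = 0 by hypothesis.
\<close>

definition acoustic_tensor :: "(3 \<Rightarrow> 3 \<Rightarrow> 3 \<Rightarrow> 3 \<Rightarrow> complex) \<Rightarrow> complex^3 \<Rightarrow> complex^3^3" where
  "acoustic_tensor L a = (\<chi> j k. \<Sum>i\<in>UNIV. \<Sum>l\<in>UNIV. L i j k l * (cnj (a $ i) * a $ l + a $ i * cnj (a $ l)))"

lemma Mq_eq_acoustic_tensor: "Mq lam0 q = acoustic_tensor (ctensor lam0) (Dq q)"
  by (simp add: Mq_def acoustic_tensor_def ctensor_def)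

lemma minor_major_sym_ctensor:
  assumes "minor_major_sym L"
  shows "ctensor L i j k l = ctensor L j i k l" "ctensor L i j k l = ctensor L i j l k"
  using assms by (simp_all add: ctensor_def minor_major_sym_def)

lemma contr_symprod_mult_nth:
  fixes L :: "3 \<Rightarrow> 3 \<Rightarrow> 3 \<Rightarrow> 3 \<Rightarrow> complex"
  assumes sym1: "\<And>i j k l. L i j k l = L j i k l" and sym2: "\<And>i j k l. L i j k l = L i j l k"
  shows "(contr L (symprod a v) *v b) $ j = (\<Sum>k\<in>UNIV. \<Sum>i\<in>UNIV. \<Sum>l\<in>UNIV. L i j k l * b $ i * a $ l * v $ k)"
proof -
  have entry: "contr L (symprod a v) $ j $ i = (\<Sum>k\<in>UNIV. \<Sum>l\<in>UNIV. L j i k l * (a $ l * v $ k))" for i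
  proof -
    have "(\<Sum>k\<in>UNIV. \<Sum>l\<in>UNIV. L j i k l * (a $ k * v $ l)) = (\<Sum>k\<in>UNIV. \<Sum>l\<in>UNIV. L j i k l * (a $ l * v $ k))"
      by (subst sum.swap) (simp add: sym2[of j i])
    then show ?thesis
      by (simp add: contr_def symprod_def add_divide_distrib distrib_left sum.distrib flip: sum_divide_distrib)
  qed
  have "(contr L (symprod a v) *v b) $ j = (\<Sum>i\<in>UNIV. \<Sum>k\<in>UNIV. \<Sum>l\<in>UNIV. L j i k l * (a $ l * v $ k) * b $ i)"
    by (simp add: matrix_vector_mult_def entry sum_distrib_right)
  also have "\<dots> = (\<Sum>i\<in>UNIV. \<Sum>k\<in>UNIV. \<Sum>l\<in>UNIV. L i j k l * b $ i * a $ l * v $ k)"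
    by (simp add: sym1[of j] algebra_simps)
  also have "\<dots> = (\<Sum>k\<in>UNIV. \<Sum>i\<in>UNIV. \<Sum>l\<in>UNIV. L i j k l * b $ i * a $ l * v $ k)"
    by (rule sum.swap)
  finally show ?thesis .
qed

lemma acoustic_tensor_mult:
  fixes L :: "3 \<Rightarrow> 3 \<Rightarrow> 3 \<Rightarrow> 3 \<Rightarrow> complex"
  assumes "\<And>i j k l. L i j k l = L j i k l" and "\<And>i j k l. L i j k l = L i j l k"
  shows "acoustic_tensor L a *v v = contr L (symprod a v) *v cvec a + contr L (symprod (cvec a) v) *v a"
proof -
  have "(acoustic_tensor L a *v v) $ j
      = (contr L (symprod a v) *v cvec a + contr L (symprod (cvec a) v) *v a) $ j" for j
    unfolding vector_add_component contr_symprod_mult_nth[OF assms]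
    by (simp add: acoustic_tensor_def matrix_vector_mult_def cvec_def sum_distrib_left sum_distrib_right
        sum.distrib algebra_simps)
  then show ?thesis by (simp add: vec_eq_iff)
qed

definition hermitian_energy :: "(3 \<Rightarrow> 3 \<Rightarrow> 3 \<Rightarrow> 3 \<Rightarrow> complex) \<Rightarrow> complex^3^3 \<Rightarrow> complex" where
  "hermitian_energy L Y = (\<Sum>i\<in>UNIV. \<Sum>j\<in>UNIV. \<Sum>k\<in>UNIV. \<Sum>l\<in>UNIV. cnj (Y $ i $ j) * L i j k l * Y $ k $ l)"

definition real_energy :: "tensor4 \<Rightarrow> real^3^3 \<Rightarrow> real^3^3 \<Rightarrow> real" where
  "real_energy L X Y = (\<Sum>i\<in>UNIV. \<Sum>j\<in>UNIV. \<Sum>k\<in>UNIV. \<Sum>l\<in>UNIV. X $ i $ j * L i j k l * Y $ k $ l)"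

lemma inner_contr_symprod_mult:
  fixes L :: "3 \<Rightarrow> 3 \<Rightarrow> 3 \<Rightarrow> 3 \<Rightarrow> complex"
  assumes sym1: "\<And>i j k l. L i j k l = L j i k l"
  shows "(\<Sum>j\<in>UNIV. cnj (w $ j) * (contr L (symprod c w) *v cvec c) $ j) = hermitian_energy L (symprod c w)"
proof -
  let ?X = "symprod c w"
  have "hermitian_energy L ?X
      = (\<Sum>i\<in>UNIV. \<Sum>j\<in>UNIV. \<Sum>k\<in>UNIV. \<Sum>l\<in>UNIV. cnj (c $ i) * cnj (w $ j) * L i j k l * ?X $ k $ l) / 2
      + (\<Sum>i\<in>UNIV. \<Sum>j\<in>UNIV. \<Sum>k\<in>UNIV. \<Sum>l\<in>UNIV. cnj (c $ j) * cnj (w $ i) * L i j k l * ?X $ k $ l) / 2"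
    unfolding hermitian_energy_def sum_divide_distrib add_divide_distrib sum.distrib[symmetric]
    by (intro sum.cong refl) (simp add: symprod_def algebra_simps add_divide_distrib)
  also have "(\<Sum>i\<in>UNIV. \<Sum>j\<in>UNIV. \<Sum>k\<in>UNIV. \<Sum>l\<in>UNIV. cnj (c $ i) * cnj (w $ j) * L i j k l * ?X $ k $ l)
      = (\<Sum>i\<in>UNIV. \<Sum>j\<in>UNIV. \<Sum>k\<in>UNIV. \<Sum>l\<in>UNIV. cnj (c $ j) * cnj (w $ i) * L i j k l * ?X $ k $ l)"
    by (subst sum.swap) (simp add: sym1)
  finally have "hermitian_energy L ?X
      = (\<Sum>i\<in>UNIV. \<Sum>j\<in>UNIV. \<Sum>k\<in>UNIV. \<Sum>l\<in>UNIV. cnj (c $ j) * cnj (w $ i) * L i j k l * ?X $ k $ l)"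
    by simp
  then show ?thesis
    by (simp add: matrix_vector_mult_def contr_def cvec_def sum_distrib_left sum_distrib_right algebra_simps)
qed

lemma real_energy_commute:
  assumes "minor_major_sym L"
  shows "real_energy L X Y = real_energy L Y X"
proof -
  have major: "L i j k l = L k l i j" for i j k l
    using assms unfolding minor_major_sym_def by blast
  have pairs: "(\<Sum>i\<in>UNIV. \<Sum>j\<in>UNIV. f i j) = (\<Sum>p\<in>UNIV\<times>UNIV. f (fst p) (snd p))" for f :: "3 \<Rightarrow> 3 \<Rightarrow> real"
    by (simp add: sum.cartesian_product split_def)
  have "real_energy L X Y = (\<Sum>p\<in>UNIV\<times>UNIV. \<Sum>r\<in>UNIV\<times>UNIV.
      X $ fst p $ snd p * L (fst p) (snd p) (fst r) (snd r) * Y $ fst r $ snd r)"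
    unfolding real_energy_def by (simp only: pairs)
  also have "\<dots> = (\<Sum>r\<in>UNIV\<times>UNIV. \<Sum>p\<in>UNIV\<times>UNIV.
      Y $ fst r $ snd r * L (fst r) (snd r) (fst p) (snd p) * X $ fst p $ snd p)"
  proof (subst sum.swap, intro sum.cong refl)
    fix p r :: "3 \<times> 3"
    show "X $ fst p $ snd p * L (fst p) (snd p) (fst r) (snd r) * Y $ fst r $ snd r
        = Y $ fst r $ snd r * L (fst r) (snd r) (fst p) (snd p) * X $ fst p $ snd p"
      using major[of "fst p" "snd p" "fst r" "snd r"] by simp
  qed
  also have "\<dots> = real_energy L Y X"
    unfolding real_energy_def by (simp only: pairs)
  finally show ?thesis .
qed

definition Re_mat :: "complex^3^3 \<Rightarrow> real^3^3" where
  "Re_mat Y = (\<chi> i j. Re (Y $ i $ j))"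

definition Im_mat :: "complex^3^3 \<Rightarrow> real^3^3" where
  "Im_mat Y = (\<chi> i j. Im (Y $ i $ j))"

lemma hermitian_energy_ctensor:
  assumes "minor_major_sym L"
  shows "hermitian_energy (ctensor L) Y
    = complex_of_real (real_energy L (Re_mat Y) (Re_mat Y) + real_energy L (Im_mat Y) (Im_mat Y))"
proof -
  have "Re (hermitian_energy (ctensor L) Y) = real_energy L (Re_mat Y) (Re_mat Y) + real_energy L (Im_mat Y) (Im_mat Y)"
    unfolding hermitian_energy_def real_energy_def ctensor_def Re_mat_def Im_mat_def
    by (simp add: sum.distrib[symmetric] algebra_simps)
  moreover have "Im (hermitian_energy (ctensor L) Y) = real_energy L (Re_mat Y) (Im_mat Y) - real_energy L (Im_mat Y) (Re_mat Y)"
    unfolding hermitian_energy_def real_energy_def ctensor_def Re_mat_def Im_mat_def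
    by (simp add: sum_subtractf[symmetric] algebra_simps)
  ultimately show ?thesis
    using real_energy_commute[OF assms] by (simp add: complex_eq_iff)
qed

lemma real_energy_nonneg:
  assumes "pos_def_sym L" and "transpose X = X"
  shows "0 \<le> real_energy L X X" and "real_energy L X X = 0 \<Longrightarrow> X = 0"
proof -
  have pos: "X \<noteq> 0 \<Longrightarrow> 0 < real_energy L X X"
    using assms unfolding pos_def_sym_def real_energy_def by blast
  show "0 \<le> real_energy L X X"
    using pos by (cases "X = 0") (auto simp: real_energy_def)
  show "real_energy L X X = 0 \<Longrightarrow> X = 0"
    using pos by force
qed

lemma transpose_symprod: "transpose (symprod a w) = symprod a w"
  by (simp add: transpose_def symprod_def vec_eq_iff add.commute)

lemma transpose_Re_mat: "transpose (Re_mat Y) = Re_mat (transpose Y)"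
  by (simp add: transpose_def Re_mat_def)

lemma transpose_Im_mat: "transpose (Im_mat Y) = Im_mat (transpose Y)"
  by (simp add: transpose_def Im_mat_def)

lemma Re_mat_Im_mat_eq_0: "Re_mat Y = 0 \<Longrightarrow> Im_mat Y = 0 \<Longrightarrow> Y = 0"
  by (simp add: Re_mat_def Im_mat_def vec_eq_iff complex_eq_iff)

lemma symprod_eq_0_imp:
  assumes "symprod a w = 0" and "a \<noteq> 0"
  shows "w = 0"
proof -
  obtain m where m: "a $ m \<noteq> 0"
    using assms(2) by (auto simp: vec_eq_iff)
  have "symprod a w $ m $ m = 0"
    using assms(1) by simp
  then have wm: "w $ m = 0"
    using m by (simp add: symprod_def)
  have "w $ j = 0" for j
  proof -
    have "symprod a w $ m $ j = 0"
      using assms(1) by simp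
    then show ?thesis
      using m wm by (simp add: symprod_def)
  qed
  then show ?thesis by (simp add: vec_eq_iff)
qed

lemma hermitian_energy_symprod_eq_0_imp:
  assumes sym: "minor_major_sym L" and pd: "pos_def_sym L" and "a \<noteq> 0"
    and sum0: "hermitian_energy (ctensor L) (symprod a w) + hermitian_energy (ctensor L) (symprod b w) = 0"
  shows "w = 0"
proof -
  have sym_parts: "transpose (Re_mat (symprod c w)) = Re_mat (symprod c w)"
    "transpose (Im_mat (symprod c w)) = Im_mat (symprod c w)" for c
    by (simp_all add: transpose_Re_mat transpose_Im_mat transpose_symprod)
  note nonneg = real_energy_nonneg[OF pd sym_parts(1)] real_energy_nonneg[OF pd sym_parts(2)]
  have "real_energy L (Re_mat (symprod a w)) (Re_mat (symprod a w)) + real_energy L (Im_mat (symprod a w)) (Im_mat (symprod a w))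
      + (real_energy L (Re_mat (symprod b w)) (Re_mat (symprod b w)) + real_energy L (Im_mat (symprod b w)) (Im_mat (symprod b w))) = 0"
    using sum0 unfolding hermitian_energy_ctensor[OF sym] by (metis of_real_add of_real_eq_0_iff)
  then have "real_energy L (Re_mat (symprod a w)) (Re_mat (symprod a w)) = 0"
    "real_energy L (Im_mat (symprod a w)) (Im_mat (symprod a w)) = 0"
    using nonneg(1,3)[of a] nonneg(1,3)[of b] by linarith+
  then have "symprod a w = 0"
    using nonneg(2,4) Re_mat_Im_mat_eq_0 by blast
  then show ?thesis
    using symprod_eq_0_imp \<open>a \<noteq> 0\<close> by blast
qed

lemma acoustic_tensor_mult_eq_0_imp:
  assumes sym: "minor_major_sym L" and pd: "pos_def_sym L" and "a \<noteq> 0"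
    and "acoustic_tensor (ctensor L) a *v w = 0"
  shows "w = 0"
proof -
  note minor = minor_major_sym_ctensor[OF sym]
  have "0 = (\<Sum>j\<in>UNIV. cnj (w $ j) * (acoustic_tensor (ctensor L) a *v w) $ j)"
    using assms(4) by simp
  also have "\<dots> = (\<Sum>j\<in>UNIV. cnj (w $ j) * (contr (ctensor L) (symprod a w) *v cvec a) $ j)
      + (\<Sum>j\<in>UNIV. cnj (w $ j) * (contr (ctensor L) (symprod (cvec a) w) *v cvec (cvec a)) $ j)"
    by (simp add: acoustic_tensor_mult[OF minor] cvec_def sum.distrib algebra_simps)
  also have "\<dots> = hermitian_energy (ctensor L) (symprod a w) + hermitian_energy (ctensor L) (symprod (cvec a) w)"
    by (simp only: inner_contr_symprod_mult[OF minor(1)])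
  finally show ?thesis
    using hermitian_energy_symprod_eq_0_imp[OF sym pd \<open>a \<noteq> 0\<close>] by simp
qed

lemma matrix_inv_mult_cancel:
  fixes A :: "'a::comm_ring_1^'n^'n"
  assumes "invertible A"
  shows "matrix_inv A *v (A *v v) = v"
proof -
  have "A ** matrix_inv A = mat 1 \<and> matrix_inv A ** A = mat 1"
    using assms unfolding invertible_def matrix_inv_def by (rule someI_ex)
  then show ?thesis
    by (metis matrix_vector_mul_assoc matrix_vector_mul_lid)
qed

lemma matrix_inv_acoustic_tensor_mult:
  assumes "minor_major_sym L" and "pos_def_sym L" and "a \<noteq> 0"
  shows "matrix_inv (acoustic_tensor (ctensor L) a) *v (acoustic_tensor (ctensor L) a *v v) = v"
proof -
  let ?M = "acoustic_tensor (ctensor L) a"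
  have "\<exists>B. B ** ?M = mat 1"
    unfolding matrix_left_invertible_ker using acoustic_tensor_mult_eq_0_imp[OF assms] by blast
  then have "invertible ?M"
    using invertible_left_inverse by blast
  then show ?thesis
    by (rule matrix_inv_mult_cancel)
qed

lemma sum_Tset:
  "(\<Sum>e\<in>Tset. f e) = f (vector [1/2, 1/2, 1/2]) + f (vector [1/2, -1/2, -1/2])
     + f (vector [-1/2, 1/2, -1/2]) + f (vector [-1/2, -1/2, 1/2])"
  unfolding Tset_def by (simp add: vec_eq_iff forall_3 vector_3 add.assoc)

lemma inner_vector_3: "(q::real^3) \<bullet> vector [a, b, c] = q $ 1 * a + q $ 2 * b + q $ 3 * c"
  by (simp add: inner_vec_def sum_3 vector_3)

lemma Dq_0: "Dq 0 = 0"
  by (simp add: Dq_def sum_Tset vec_eq_iff forall_3)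

lemma Dq_eq_0_imp_pair_sums:
  assumes "Dq q = 0"
  obtains n1 n2 n3 :: int where "q $ 2 + q $ 3 = 2 * pi * n1" "q $ 1 + q $ 3 = 2 * pi * n2"
    "q $ 1 + q $ 2 = 2 * pi * n3"
proof -
  define z :: "real \<Rightarrow> real \<Rightarrow> real \<Rightarrow> complex" where
    "z a b c = exp (\<i> * complex_of_real (q \<bullet> vector [a, b, c]))" for a b c
  let ?z1 = "z (1/2) (1/2) (1/2)" and ?z2 = "z (1/2) (-1/2) (-1/2)"
  let ?z3 = "z (-1/2) (1/2) (-1/2)" and ?z4 = "z (-1/2) (-1/2) (1/2)"
  have "Dq q $ 1 = (?z1 + ?z2 - ?z3 - ?z4) / 2" "Dq q $ 2 = (?z1 - ?z2 + ?z3 - ?z4) / 2"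
    "Dq q $ 3 = (?z1 - ?z2 - ?z3 + ?z4) / 2"
    unfolding Dq_def z_def by (simp_all add: sum_Tset diff_divide_distrib add_divide_distrib)
  then have a: "?z1 + ?z2 - ?z3 - ?z4 = 0" and b: "?z1 - ?z2 + ?z3 - ?z4 = 0" and c: "?z1 - ?z2 - ?z3 + ?z4 = 0"
    using assms by simp_all
  have "2 * (?z1 - ?z4) = 0" "2 * (?z1 - ?z3) = 0"
    using arg_cong2[where f = "(+)", OF a b] arg_cong2[where f = "(+)", OF a c] by (simp_all add: algebra_simps)
  then have "?z1 = ?z3" "?z1 = ?z4"
    by simp_all
  with a have "?z1 = ?z2" "?z1 = ?z3" "?z1 = ?z4"
    by simp_all
  then obtain m1 m2 m3 :: int where
    "\<i> * complex_of_real (q \<bullet> vector [1/2, 1/2, 1/2])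
       = \<i> * complex_of_real (q \<bullet> vector [1/2, -1/2, -1/2]) + of_int (2 * m1) * pi * \<i>"
    "\<i> * complex_of_real (q \<bullet> vector [1/2, 1/2, 1/2])
       = \<i> * complex_of_real (q \<bullet> vector [-1/2, 1/2, -1/2]) + of_int (2 * m2) * pi * \<i>"
    "\<i> * complex_of_real (q \<bullet> vector [1/2, 1/2, 1/2])
       = \<i> * complex_of_real (q \<bullet> vector [-1/2, -1/2, 1/2]) + of_int (2 * m3) * pi * \<i>"
    unfolding z_def exp_eq by blast
  then have "q $ 2 + q $ 3 = 2 * pi * m1" "q $ 1 + q $ 3 = 2 * pi * m2" "q $ 1 + q $ 2 = 2 * pi * m3"
    by (simp_all add: complex_eq_iff inner_vector_3 algebra_simps)
  then show ?thesis by (rule that)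
qed

lemma QN_nth_bounds:
  assumes "q \<in> QN N1 N2 N3"
  shows "0 \<le> q $ i \<and> q $ i < 2 * pi"
proof -
  have bound: "0 \<le> 2 * pi * real h / real N \<and> 2 * pi * real h / real N < 2 * pi" if "h < N" for h N :: nat
    using that by (simp add: divide_less_eq)
  obtain h1 h2 h3 where h: "h1 < N1" "h2 < N2" "h3 < N3"
    and q: "q = vector [2 * pi * real h1 / real N1, 2 * pi * real h2 / real N2, 2 * pi * real h3 / real N3]"
    using assms unfolding QN_def by blast
  consider "i = 1" | "i = 2" | "i = 3"
    using exhaust_3 by blast
  then show ?thesis
    by cases (simp_all add: q bound h)
qed

lemma pi_multiple_in_period:
  assumes "q = pi * of_int m" and "0 \<le> q" and "q < 2 * pi"
  shows "m = 0 \<or> m = 1"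
proof -
  have "0 \<le> real_of_int m" "real_of_int m < 2"
    using assms pi_gt_zero by (simp_all add: zero_le_mult_iff)
  then show ?thesis by linarith
qed

lemma Dq_eq_0_imp_QN:
  assumes q: "q \<in> QN N1 N2 N3" and "Dq q = 0"
  shows "q = 0 \<or> q = vector [pi, pi, pi]"
proof -
  obtain n1 n2 n3 :: int where n: "q $ 2 + q $ 3 = 2 * pi * n1" "q $ 1 + q $ 3 = 2 * pi * n2"
    "q $ 1 + q $ 2 = 2 * pi * n3"
    using Dq_eq_0_imp_pair_sums[OF \<open>Dq q = 0\<close>] by blast
  define m1 m2 m3 where "m1 = n2 + n3 - n1" and "m2 = n1 + n3 - n2" and "m3 = n1 + n2 - n3"
  have "q $ 1 = pi * m1" "q $ 2 = pi * m2" "q $ 3 = pi * m3"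
    using n unfolding m1_def m2_def m3_def by (simp_all add: algebra_simps)
  moreover have "m1 = 0 \<or> m1 = 1" "m2 = 0 \<or> m2 = 1" "m3 = 0 \<or> m3 = 1"
    using pi_multiple_in_period QN_nth_bounds[OF q] calculation by blast+
  moreover have "even (m1 + m2)" "even (m1 + m3)"
    unfolding m1_def m2_def m3_def by simp_all
  ultimately have "q $ 1 = pi * m1 \<and> q $ 2 = pi * m1 \<and> q $ 3 = pi * m1" "m1 = 0 \<or> m1 = 1"
    by auto
  then show ?thesis
    by (auto simp: vec_eq_iff forall_3)
qed

definition translation_closed :: "(real^3) set \<Rightarrow> bool" where
  "translation_closed G \<longleftrightarrow> (\<forall>x\<in>G. \<forall>z\<in>Sgrid. x + z \<in> G)"

lemma Sgrid_uminus: "z \<in> Sgrid \<Longrightarrow> - z \<in> Sgrid"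
  by (simp add: Sgrid_def)

lemma Sgrid_scaleR_of_int: "z \<in> Sgrid \<Longrightarrow> of_int m *\<^sub>R z \<in> Sgrid"
  by (simp add: Sgrid_def)

lemma translation_closed_Sgrid: "translation_closed Sgrid"
  by (simp add: translation_closed_def Sgrid_def)

lemma translation_closed_Pgrid: "translation_closed Pgrid"
proof -
  have "(x $ i + z $ i) - 1/2 \<in> \<int>" if "x $ i - 1/2 \<in> \<int>" "z $ i \<in> \<int>" for x z :: "real^3" and i
    using Ints_add[OF that] by (simp add: algebra_simps)
  then show ?thesis
    by (simp add: translation_closed_def Pgrid_def Sgrid_def)
qed

lemma translation_closed_diff: "translation_closed G \<Longrightarrow> x \<in> G \<Longrightarrow> z \<in> Sgrid \<Longrightarrow> x - z \<in> G"
  unfolding translation_closed_def using Sgrid_uminus by (metis diff_conv_add_uminus)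

lemma half_offset_shifts_grids:
  assumes "\<And>i. c $ i = 1/2 \<or> c $ i = -1/2"
  shows "\<forall>x\<in>Sgrid. x + c \<in> Pgrid" and "\<forall>y\<in>Pgrid. y - c \<in> Sgrid"
proof -
  have c_half: "c $ i - 1/2 \<in> \<int>" for i
  proof -
    have "c $ i - 1/2 = 0 \<or> c $ i - 1/2 = -1"
      using assms[of i] by auto
    then show ?thesis
      by (metis Ints_0 Ints_1 Ints_minus)
  qed
  have "x $ i + (c $ i - 1/2) \<in> \<int>" if "x $ i \<in> \<int>" for x :: "real^3" and i
    by (intro Ints_add that c_half)
  moreover have "(y $ i - 1/2) - (c $ i - 1/2) \<in> \<int>" if "y $ i - 1/2 \<in> \<int>" for y :: "real^3" and i
    by (intro Ints_diff that c_half)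
  ultimately show "\<forall>x\<in>Sgrid. x + c \<in> Pgrid" and "\<forall>y\<in>Pgrid. y - c \<in> Sgrid"
    unfolding Sgrid_def Pgrid_def by (simp_all add: algebra_simps)
qed

lemma Tset_nth: "e \<in> Tset \<Longrightarrow> e $ i = 1/2 \<or> e $ i = -1/2"
  unfolding Tset_def using exhaust_3[of i] by (auto simp: vector_3)

lemma Tset_shifts_grids:
  assumes "e \<in> Tset"
  shows "\<forall>x\<in>Sgrid. x + e \<in> Pgrid" "\<forall>y\<in>Pgrid. y - e \<in> Sgrid"
    "\<forall>x\<in>Sgrid. x + - e \<in> Pgrid" "\<forall>y\<in>Pgrid. y - - e \<in> Sgrid"
proof -
  have "e $ i = 1/2 \<or> e $ i = -1/2" "(- e) $ i = 1/2 \<or> (- e) $ i = -1/2" for i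
    using Tset_nth[OF assms, of i] by auto
  then show "\<forall>x\<in>Sgrid. x + e \<in> Pgrid" "\<forall>y\<in>Pgrid. y - e \<in> Sgrid"
    "\<forall>x\<in>Sgrid. x + - e \<in> Pgrid" "\<forall>y\<in>Pgrid. y - - e \<in> Sgrid"
    using half_offset_shifts_grids by blast+
qed

lemma periodic_add_int_multiple:
  assumes G: "translation_closed G" and "d \<in> Sgrid" and per: "\<forall>y\<in>G. g (y + d) = g y" and "x \<in> G"
  shows "g (x + of_int m *\<^sub>R d) = g x"
proof (induction m rule: int_induct[where k = 0])
  case base
  then show ?case by simp
next
  case (step1 i)
  have "x + of_int i *\<^sub>R d \<in> G"
    using G assms(2,4) Sgrid_scaleR_of_int unfolding translation_closed_def by blast
  then have "g (x + of_int i *\<^sub>R d + d) = g (x + of_int i *\<^sub>R d)"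
    using per by blast
  then show ?case
    using step1 by (simp add: algebra_simps)
next
  case (step2 i)
  have "x + of_int (i - 1) *\<^sub>R d \<in> G"
    using G assms(2,4) Sgrid_scaleR_of_int unfolding translation_closed_def by blast
  then have "g (x + of_int (i - 1) *\<^sub>R d + d) = g (x + of_int (i - 1) *\<^sub>R d)"
    using per by blast
  then show ?case
    using step2 by (simp add: algebra_simps)
qed

definition lattice_point :: "nat \<Rightarrow> nat \<Rightarrow> nat \<Rightarrow> int \<Rightarrow> int \<Rightarrow> int \<Rightarrow> real^3" where
  "lattice_point N1 N2 N3 k1 k2 k3 = vector [real N1 * of_int k1, real N2 * of_int k2, real N3 * of_int k3]"

lemma lattice_point_in_Sgrid: "lattice_point N1 N2 N3 k1 k2 k3 \<in> Sgrid"
  by (simp add: lattice_point_def Sgrid_def forall_3 vector_3)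

lemma periodic_add_lattice_point:
  assumes G: "translation_closed G" and per: "lattice_periodic_on G N1 N2 N3 g" and x: "x \<in> G"
  shows "g (x + lattice_point N1 N2 N3 k1 k2 k3) = g x"
proof -
  let ?d1 = "vector [real N1, 0, 0] :: real^3" and ?d2 = "vector [0, real N2, 0] :: real^3"
    and ?d3 = "vector [0, 0, real N3] :: real^3"
  have d: "?d1 \<in> Sgrid" "?d2 \<in> Sgrid" "?d3 \<in> Sgrid"
    by (simp_all add: Sgrid_def forall_3 vector_3)
  have per_d: "\<forall>y\<in>G. g (y + ?d1) = g y" "\<forall>y\<in>G. g (y + ?d2) = g y" "\<forall>y\<in>G. g (y + ?d3) = g y"
    using per unfolding lattice_periodic_on_def by auto
  have x1: "x + of_int k1 *\<^sub>R ?d1 \<in> G" and x2: "x + of_int k1 *\<^sub>R ?d1 + of_int k2 *\<^sub>R ?d2 \<in> G"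
    using G x d Sgrid_scaleR_of_int unfolding translation_closed_def by blast+
  have "lattice_point N1 N2 N3 k1 k2 k3 = of_int k1 *\<^sub>R ?d1 + of_int k2 *\<^sub>R ?d2 + of_int k3 *\<^sub>R ?d3"
    by (simp add: lattice_point_def vec_eq_iff forall_3 vector_3 mult.commute)
  then have "g (x + lattice_point N1 N2 N3 k1 k2 k3) = g (x + of_int k1 *\<^sub>R ?d1 + of_int k2 *\<^sub>R ?d2 + of_int k3 *\<^sub>R ?d3)"
    by (simp add: add.assoc)
  also have "\<dots> = g x"
    using periodic_add_int_multiple[OF G d(3) per_d(3) x2] periodic_add_int_multiple[OF G d(2) per_d(2) x1]
      periodic_add_int_multiple[OF G d(1) per_d(1) x] by simp
  finally show ?thesis .
qed

definition period_rep :: "nat \<Rightarrow> nat \<Rightarrow> nat \<Rightarrow> real^3 \<Rightarrow> real^3" where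
  "period_rep N1 N2 N3 x =
     x + lattice_point N1 N2 N3 (- \<lfloor>x $ 1 / real N1\<rfloor>) (- \<lfloor>x $ 2 / real N2\<rfloor>) (- \<lfloor>x $ 3 / real N3\<rfloor>)"

lemma period_rep_nth:
  "period_rep N1 N2 N3 x $ 1 = x $ 1 - real N1 * \<lfloor>x $ 1 / real N1\<rfloor>"
  "period_rep N1 N2 N3 x $ 2 = x $ 2 - real N2 * \<lfloor>x $ 2 / real N2\<rfloor>"
  "period_rep N1 N2 N3 x $ 3 = x $ 3 - real N3 * \<lfloor>x $ 3 / real N3\<rfloor>"
  by (simp_all add: period_rep_def lattice_point_def vector_3)

lemma diff_floor_divide_bounds:
  assumes "0 < n"
  shows "0 \<le> t - real n * \<lfloor>t / real n\<rfloor> \<and> t - real n * \<lfloor>t / real n\<rfloor> < real n"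
proof -
  have "t - real n * \<lfloor>t / real n\<rfloor> = real n * frac (t / real n)"
    using assms by (simp add: frac_def algebra_simps)
  then show ?thesis
    using assms frac_ge_0 frac_lt_1 by (simp add: mult_less_cancel_left1 mult.commute)
qed

lemma period_rep_in_period_box:
  assumes N: "0 < N1" "0 < N2" "0 < N3" and G: "translation_closed G" and x: "x \<in> G"
  shows "period_rep N1 N2 N3 x \<in> period_box G N1 N2 N3"
proof -
  have "period_rep N1 N2 N3 x \<in> G"
    using G x lattice_point_in_Sgrid unfolding translation_closed_def period_rep_def by blast
  moreover have "0 \<le> period_rep N1 N2 N3 x $ 1 \<and> period_rep N1 N2 N3 x $ 1 < real N1"
    "0 \<le> period_rep N1 N2 N3 x $ 2 \<and> period_rep N1 N2 N3 x $ 2 < real N2"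
    "0 \<le> period_rep N1 N2 N3 x $ 3 \<and> period_rep N1 N2 N3 x $ 3 < real N3"
    unfolding period_rep_nth by (simp_all only: diff_floor_divide_bounds N)
  ultimately show ?thesis
    unfolding period_box_def by blast
qed

lemma floor_divide_eq_0: "0 \<le> t \<Longrightarrow> t < real n \<Longrightarrow> \<lfloor>t / real n\<rfloor> = 0"
  by (simp add: floor_eq_iff)

lemma period_rep_eq_self:
  assumes "r \<in> period_box G N1 N2 N3"
  shows "period_rep N1 N2 N3 r = r"
proof -
  have "\<lfloor>r $ 1 / real N1\<rfloor> = 0" "\<lfloor>r $ 2 / real N2\<rfloor> = 0" "\<lfloor>r $ 3 / real N3\<rfloor> = 0"
    using assms unfolding period_box_def by (simp_all add: floor_divide_eq_0)
  then show ?thesis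
    by (simp add: vec_eq_iff forall_3 period_rep_nth)
qed

lemma period_rep_add_lattice_point:
  assumes "0 < N1" "0 < N2" "0 < N3"
  shows "period_rep N1 N2 N3 (x + lattice_point N1 N2 N3 k1 k2 k3) = period_rep N1 N2 N3 x"
proof -
  have shift: "\<lfloor>(t + of_int k * real n) / real n\<rfloor> = \<lfloor>t / real n\<rfloor> + k" if "0 < n" for t n k
  proof -
    have "(t + of_int k * real n) / real n = t / real n + of_int k"
      using that by (simp add: field_simps)
    then show ?thesis by simp
  qed
  show ?thesis
    using assms by (simp add: vec_eq_iff forall_3 period_rep_nth lattice_point_def shift algebra_simps)
qed

lemma period_rep_period_rep_add_diff:
  assumes "0 < N1" "0 < N2" "0 < N3"
  shows "period_rep N1 N2 N3 (period_rep N1 N2 N3 (x + a) - a) = period_rep N1 N2 N3 x"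
proof -
  let ?y = "x + a"
  have "period_rep N1 N2 N3 ?y - a
      = x + lattice_point N1 N2 N3 (- \<lfloor>?y $ 1 / real N1\<rfloor>) (- \<lfloor>?y $ 2 / real N2\<rfloor>) (- \<lfloor>?y $ 3 / real N3\<rfloor>)"
    unfolding period_rep_def by (simp add: algebra_simps)
  then show ?thesis
    by (simp add: period_rep_add_lattice_point[OF assms])
qed

lemma periodic_period_rep:
  "translation_closed G \<Longrightarrow> lattice_periodic_on G N1 N2 N3 g \<Longrightarrow> x \<in> G \<Longrightarrow> g (period_rep N1 N2 N3 x) = g x"
  unfolding period_rep_def by (rule periodic_add_lattice_point)

lemma sum_period_box_translate:
  assumes N: "0 < N1" "0 < N2" "0 < N3" and G: "translation_closed G" and G': "translation_closed G'"
    and to_G': "\<forall>x\<in>G. x + a \<in> G'" and to_G: "\<forall>y\<in>G'. y - a \<in> G"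
    and per: "lattice_periodic_on G' N1 N2 N3 g"
  shows "(\<Sum>r\<in>period_box G N1 N2 N3. g (r + a)) = (\<Sum>p\<in>period_box G' N1 N2 N3. g p)"
proof (rule sum.reindex_bij_witness[where j = "\<lambda>r. period_rep N1 N2 N3 (r + a)" and i = "\<lambda>p. period_rep N1 N2 N3 (p - a)"])
  fix r assume r: "r \<in> period_box G N1 N2 N3"
  then have "r + a \<in> G'"
    using to_G' by (simp add: period_box_def)
  then show "period_rep N1 N2 N3 (r + a) \<in> period_box G' N1 N2 N3"
    and "g (period_rep N1 N2 N3 (r + a)) = g (r + a)"
    using period_rep_in_period_box[OF N G'] periodic_period_rep[OF G' per] by blast+
  show "period_rep N1 N2 N3 (period_rep N1 N2 N3 (r + a) - a) = r"
    using period_rep_period_rep_add_diff[OF N] period_rep_eq_self[OF r] by simp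
next
  fix p assume p: "p \<in> period_box G' N1 N2 N3"
  then have "p - a \<in> G"
    using to_G by (simp add: period_box_def)
  then show "period_rep N1 N2 N3 (p - a) \<in> period_box G N1 N2 N3"
    using period_rep_in_period_box[OF N G] by blast
  show "period_rep N1 N2 N3 (period_rep N1 N2 N3 (p - a) + a) = p"
    using period_rep_period_rep_add_diff[OF N, of p "- a"] period_rep_eq_self[OF p] by simp
qed

abbreviation dft_kernel :: "real^3 \<Rightarrow> real^3 \<Rightarrow> complex" where
  "dft_kernel q r \<equiv> exp (- \<i> * complex_of_real (q \<bullet> r))"

lemma dft_kernel_add: "dft_kernel q (r + a) = dft_kernel q a * dft_kernel q r"
  by (simp add: inner_add_right algebra_simps flip: exp_add)

lemma dft_kernel_eq_1_iff: "dft_kernel q d = 1 \<longleftrightarrow> (\<exists>n::int. q \<bullet> d = 2 * pi * n)"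
proof -
  have "dft_kernel q d = 1 \<longleftrightarrow> (\<exists>n::int. - (q \<bullet> d) = 2 * pi * n)"
    by (simp add: exp_eq_1 mult.commute mult.left_commute)
  also have "\<dots> \<longleftrightarrow> (\<exists>n::int. q \<bullet> d = 2 * pi * n)"
    by (metis minus_minus mult_minus_right of_int_minus)
  finally show ?thesis .
qed

lemma lattice_periodic_on_dft_kernel:
  assumes "q \<in> QN N1 N2 N3" and "0 < N1" "0 < N2" "0 < N3"
  shows "lattice_periodic_on G N1 N2 N3 (dft_kernel q)"
proof -
  obtain h1 h2 h3 where
    "q = vector [2 * pi * real h1 / real N1, 2 * pi * real h2 / real N2, 2 * pi * real h3 / real N3]"
    using assms(1) unfolding QN_def by blast
  then have "q \<bullet> vector [real N1, 0, 0] = 2 * pi * real h1" "q \<bullet> vector [0, real N2, 0] = 2 * pi * real h2"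
    "q \<bullet> vector [0, 0, real N3] = 2 * pi * real h3"
    using assms(2-4) by (simp_all add: inner_vector_3)
  then have "dft_kernel q (vector [real N1, 0, 0]) = 1" "dft_kernel q (vector [0, real N2, 0]) = 1"
    "dft_kernel q (vector [0, 0, real N3]) = 1"
    unfolding dft_kernel_eq_1_iff by (metis of_int_of_nat_eq)+
  then show ?thesis
    unfolding lattice_periodic_on_def dft_kernel_add by simp
qed

lemma lattice_periodic_on_mult:
  "lattice_periodic_on G N1 N2 N3 f \<Longrightarrow> lattice_periodic_on G N1 N2 N3 g
    \<Longrightarrow> lattice_periodic_on G N1 N2 N3 (\<lambda>r. f r * g r)"
  unfolding lattice_periodic_on_def by simp

lemma lattice_periodic_on_comp:
  "lattice_periodic_on G N1 N2 N3 f \<Longrightarrow> lattice_periodic_on G N1 N2 N3 (\<lambda>r. h (f r))"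
  unfolding lattice_periodic_on_def by simp

lemma dft_add: "dft G N1 N2 N3 (\<lambda>r. f r + g r) q = dft G N1 N2 N3 f q + dft G N1 N2 N3 g q"
  unfolding dft_def by (simp add: sum.distrib distrib_right distrib_left)

lemma dft_diff: "dft G N1 N2 N3 (\<lambda>r. f r - g r) q = dft G N1 N2 N3 f q - dft G N1 N2 N3 g q"
  unfolding dft_def by (simp add: sum_subtractf left_diff_distrib right_diff_distrib)

lemma dft_cmult: "dft G N1 N2 N3 (\<lambda>r. c * f r) q = c * dft G N1 N2 N3 f q"
  unfolding dft_def by (simp add: sum_distrib_left algebra_simps)

lemma dft_sum: "dft G N1 N2 N3 (\<lambda>r. \<Sum>k\<in>K. f k r) q = (\<Sum>k\<in>K. dft G N1 N2 N3 (f k) q)"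
  unfolding dft_def by (simp add: sum_distrib_left sum_distrib_right sum.swap[of _ K])

lemma sum_period_box_dft_kernel_eq_0:
  assumes N: "0 < N1" "0 < N2" "0 < N3" and q: "q \<in> QN N1 N2 N3" and "q \<noteq> 0"
  shows "(\<Sum>r\<in>period_box Sgrid N1 N2 N3. dft_kernel q r) = 0"
proof -
  obtain k where k: "q $ k \<noteq> 0"
    using \<open>q \<noteq> 0\<close> by (auto simp: vec_eq_iff)
  \<comment> \<open>translating by the k-th unit vector multiplies the sum by a root of unity other than 1\<close>
  let ?a = "axis k 1 :: real^3"
  have "dft_kernel q ?a \<noteq> 1"
  proof
    assume "dft_kernel q ?a = 1"
    then obtain n :: int where "q $ k = 2 * pi * n"
      unfolding dft_kernel_eq_1_iff by (auto simp: inner_axis)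
    moreover have "0 < q $ k" "q $ k < 2 * pi"
      using QN_nth_bounds[OF q, of k] k by auto
    ultimately have "0 < n" "n < 1"
      by (simp_all add: zero_less_mult_iff)
    then show False by simp
  qed
  have "?a \<in> Sgrid"
    by (simp add: Sgrid_def axis_def)
  then have "\<forall>x\<in>Sgrid. x + ?a \<in> Sgrid" "\<forall>y\<in>Sgrid. y - ?a \<in> Sgrid"
    using translation_closed_Sgrid translation_closed_diff[OF translation_closed_Sgrid]
    unfolding translation_closed_def by blast+
  then have "(\<Sum>r\<in>period_box Sgrid N1 N2 N3. dft_kernel q r)
      = (\<Sum>r\<in>period_box Sgrid N1 N2 N3. dft_kernel q (r + ?a))"
    by (intro sum_period_box_translate[OF N translation_closed_Sgrid translation_closed_Sgrid _ _
        lattice_periodic_on_dft_kernel[OF q N], symmetric])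
  also have "\<dots> = dft_kernel q ?a * (\<Sum>r\<in>period_box Sgrid N1 N2 N3. dft_kernel q r)"
    unfolding dft_kernel_add by (simp add: sum_distrib_left)
  finally have "(1 - dft_kernel q ?a) * (\<Sum>r\<in>period_box Sgrid N1 N2 N3. dft_kernel q r) = 0"
    by (simp add: algebra_simps)
  then show ?thesis
    using \<open>dft_kernel q ?a \<noteq> 1\<close> by simp
qed

lemma dft_const_eq_0:
  assumes "0 < N1" "0 < N2" "0 < N3" and "q \<in> QN N1 N2 N3" and "q \<noteq> 0"
  shows "dft Sgrid N1 N2 N3 (\<lambda>r. c) q = 0"
  using sum_period_box_dft_kernel_eq_0[OF assms] by (simp add: dft_def flip: sum_distrib_left)

lemma sum_period_box_translate_dft_kernel:
  assumes N: "0 < N1" "0 < N2" "0 < N3" and q: "q \<in> QN N1 N2 N3" and f: "lattice_periodic_on Pgrid N1 N2 N3 f"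
    and to_P: "\<forall>x\<in>Sgrid. x + a \<in> Pgrid" and to_S: "\<forall>y\<in>Pgrid. y - a \<in> Sgrid"
  shows "(\<Sum>r\<in>period_box Sgrid N1 N2 N3. complex_of_real (f (r + a)) * dft_kernel q r)
    = exp (\<i> * complex_of_real (q \<bullet> a)) * (\<Sum>p\<in>period_box Pgrid N1 N2 N3. complex_of_real (f p) * dft_kernel q p)"
proof -
  have per: "lattice_periodic_on Pgrid N1 N2 N3 (\<lambda>p. complex_of_real (f p) * dft_kernel q p)"
    by (rule lattice_periodic_on_mult[OF lattice_periodic_on_comp[OF f] lattice_periodic_on_dft_kernel[OF q N]])
  have "dft_kernel q r = exp (\<i> * complex_of_real (q \<bullet> a)) * dft_kernel q (r + a)" for r
    unfolding dft_kernel_add by (simp add: exp_minus_inverse flip: exp_add mult.assoc)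
  then have "(\<Sum>r\<in>period_box Sgrid N1 N2 N3. complex_of_real (f (r + a)) * dft_kernel q r)
      = exp (\<i> * complex_of_real (q \<bullet> a)) * (\<Sum>r\<in>period_box Sgrid N1 N2 N3. complex_of_real (f (r + a)) * dft_kernel q (r + a))"
    by (simp add: sum_distrib_left algebra_simps)
  also have "(\<Sum>r\<in>period_box Sgrid N1 N2 N3. complex_of_real (f (r + a)) * dft_kernel q (r + a))
      = (\<Sum>p\<in>period_box Pgrid N1 N2 N3. complex_of_real (f p) * dft_kernel q p)"
    by (rule sum_period_box_translate[OF N translation_closed_Sgrid translation_closed_Pgrid to_P to_S per])
  finally show ?thesis .
qed

lemma dft_Dplus:
  assumes N: "0 < N1" "0 < N2" "0 < N3" and q: "q \<in> QN N1 N2 N3" and f: "lattice_periodic_on Pgrid N1 N2 N3 f"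
  shows "dft Sgrid N1 N2 N3 (\<lambda>r. complex_of_real (Dplus f r i)) q
    = Dq q $ i * dft Pgrid N1 N2 N3 (\<lambda>p. complex_of_real (f p)) q"
proof -
  let ?F = "\<Sum>p\<in>period_box Pgrid N1 N2 N3. complex_of_real (f p) * dft_kernel q p"
  have "(\<Sum>r\<in>period_box Sgrid N1 N2 N3. complex_of_real (Dplus f r i) * dft_kernel q r)
      = (\<Sum>e\<in>Tset. complex_of_real (e $ i) * (\<Sum>r\<in>period_box Sgrid N1 N2 N3. complex_of_real (f (r + e)) * dft_kernel q r))"
    unfolding Dplus_def by (simp add: sum_distrib_left sum_distrib_right mult.assoc sum.swap[of _ Tset])
  also have "\<dots> = (\<Sum>e\<in>Tset. complex_of_real (e $ i) * (exp (\<i> * complex_of_real (q \<bullet> e)) * ?F))"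
    by (intro sum.cong refl arg_cong2[where f = "(*)"] sum_period_box_translate_dft_kernel[OF N q f]
        Tset_shifts_grids)
  also have "\<dots> = Dq q $ i * ?F"
    unfolding Dq_def by (simp add: sum_distrib_right mult.assoc)
  finally show ?thesis
    unfolding dft_def by simp
qed

lemma cnj_Dq_nth: "cnj (Dq q $ i) = (\<Sum>e\<in>Tset. complex_of_real (e $ i) * exp (\<i> * complex_of_real (q \<bullet> - e)))"
  unfolding Dq_def by (simp add: exp_cnj)

lemma dft_Dminus:
  assumes N: "0 < N1" "0 < N2" "0 < N3" and q: "q \<in> QN N1 N2 N3" and f: "lattice_periodic_on Pgrid N1 N2 N3 f"
  shows "dft Sgrid N1 N2 N3 (\<lambda>r. complex_of_real (Dminus f r i)) q
    = - cnj (Dq q $ i) * dft Pgrid N1 N2 N3 (\<lambda>p. complex_of_real (f p)) q"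
proof -
  let ?F = "\<Sum>p\<in>period_box Pgrid N1 N2 N3. complex_of_real (f p) * dft_kernel q p"
  have "(\<Sum>r\<in>period_box Sgrid N1 N2 N3. complex_of_real (Dminus f r i) * dft_kernel q r)
      = - (\<Sum>e\<in>Tset. complex_of_real (e $ i) * (\<Sum>r\<in>period_box Sgrid N1 N2 N3. complex_of_real (f (r + - e)) * dft_kernel q r))"
    unfolding Dminus_def by (simp add: sum_distrib_left sum_distrib_right mult.assoc sum.swap[of _ Tset] sum_negf)
  also have "\<dots> = - (\<Sum>e\<in>Tset. complex_of_real (e $ i) * (exp (\<i> * complex_of_real (q \<bullet> - e)) * ?F))"
    by (intro arg_cong[where f = uminus] sum.cong refl arg_cong2[where f = "(*)"]
        sum_period_box_translate_dft_kernel[OF N q f] Tset_shifts_grids)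
  also have "\<dots> = - cnj (Dq q $ i) * ?F"
    unfolding cnj_Dq_nth by (simp add: sum_distrib_right mult.assoc)
  finally show ?thesis
    unfolding dft_def by simp
qed

lemma contr_uminus: "contr L (- X) = - contr L (X :: 'a::comm_ring_1^3^3)"
  by (simp add: contr_def vec_eq_iff sum_negf)

lemma dft_mat_deps_1:
  assumes N: "0 < N1" "0 < N2" "0 < N3" and q: "q \<in> QN N1 N2 N3" and u: "lattice_periodic_on Pgrid N1 N2 N3 u"
  shows "dft_mat Sgrid N1 N2 N3 (deps 1 u) q = symprod (Dq q) (dft_vec Pgrid N1 N2 N3 u q)"
proof -
  have "dft Sgrid N1 N2 N3 (\<lambda>r. complex_of_real (deps 1 u r $ i $ j)) q
      = symprod (Dq q) (dft_vec Pgrid N1 N2 N3 u q) $ i $ j" for i j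
  proof -
    have eq: "(\<lambda>r. complex_of_real (deps 1 u r $ i $ j))
        = (\<lambda>r. 1/2 * (complex_of_real (Dplus (\<lambda>p. u p $ j) r i) + complex_of_real (Dplus (\<lambda>p. u p $ i) r j)))"
      by (simp add: deps_def Dpm_def)
    show ?thesis
      unfolding eq dft_cmult dft_add dft_Dplus[OF N q lattice_periodic_on_comp[OF u, of "\<lambda>v. v $ i"]]
        dft_Dplus[OF N q lattice_periodic_on_comp[OF u, of "\<lambda>v. v $ j"]]
      by (simp add: symprod_def dft_vec_def)
  qed
  then show ?thesis
    by (simp add: dft_mat_def vec_eq_iff)
qed

lemma dft_mat_deps_2:
  assumes N: "0 < N1" "0 < N2" "0 < N3" and q: "q \<in> QN N1 N2 N3" and u: "lattice_periodic_on Pgrid N1 N2 N3 u"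
  shows "dft_mat Sgrid N1 N2 N3 (deps 2 u) q = - symprod (cvec (Dq q)) (dft_vec Pgrid N1 N2 N3 u q)"
proof -
  have "dft Sgrid N1 N2 N3 (\<lambda>r. complex_of_real (deps 2 u r $ i $ j)) q
      = - symprod (cvec (Dq q)) (dft_vec Pgrid N1 N2 N3 u q) $ i $ j" for i j
  proof -
    have eq: "(\<lambda>r. complex_of_real (deps 2 u r $ i $ j))
        = (\<lambda>r. 1/2 * (complex_of_real (Dminus (\<lambda>p. u p $ j) r i) + complex_of_real (Dminus (\<lambda>p. u p $ i) r j)))"
      by (simp add: deps_def Dpm_def)
    show ?thesis
      unfolding eq dft_cmult dft_add dft_Dminus[OF N q lattice_periodic_on_comp[OF u, of "\<lambda>v. v $ i"]]
        dft_Dminus[OF N q lattice_periodic_on_comp[OF u, of "\<lambda>v. v $ j"]]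
      by (simp add: symprod_def dft_vec_def
          cvec_def algebra_simps)
  qed
  then show ?thesis
    by (simp add: dft_mat_def vec_eq_iff)
qed

lemma dft_mat_epsm:
  assumes "0 < N1" "0 < N2" "0 < N3" and "q \<in> QN N1 N2 N3" and "q \<noteq> 0"
  shows "dft_mat Sgrid N1 N2 N3 (epsm m ebar u) q = dft_mat Sgrid N1 N2 N3 (deps m u) q"
proof -
  have "(\<lambda>r. complex_of_real (epsm m ebar u r $ i $ j))
      = (\<lambda>r. complex_of_real (ebar $ i $ j) + complex_of_real (deps m u r $ i $ j))" for i j
    by (simp add: epsm_def)
  then show ?thesis
    by (simp add: dft_mat_def vec_eq_iff dft_add dft_const_eq_0[OF assms])
qed

lemma dft_mat_taum:
  "dft_mat G N1 N2 N3 (taum m lam lam0 eps0 ebar u) q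
    = dft_mat G N1 N2 N3 (sigm m lam eps0 ebar u) q - contr (ctensor lam0) (dft_mat G N1 N2 N3 (epsm m ebar u) q)"
proof -
  have "(\<lambda>r. complex_of_real (taum m lam lam0 eps0 ebar u r $ i $ j))
      = (\<lambda>r. complex_of_real (sigm m lam eps0 ebar u r $ i $ j)
          - (\<Sum>k\<in>UNIV. \<Sum>l\<in>UNIV. complex_of_real (lam0 i j k l) * complex_of_real (epsm m ebar u r $ k $ l)))" for i j
    by (simp add: taum_def contr_def)
  then show ?thesis
    by (simp add: dft_mat_def vec_eq_iff contr_def ctensor_def dft_diff dft_sum dft_cmult)
qed

lemma Omega_mult_acoustic_tensor:
  assumes "minor_major_sym lam0" and "pos_def_sym lam0" and "Dq q = 0 \<longrightarrow> v = 0"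
  shows "Omega lam0 q *v (contr (ctensor lam0) (symprod (Dq q) v) *v cvec (Dq q)
      + contr (ctensor lam0) (symprod (cvec (Dq q)) v) *v Dq q) = v"
proof (cases "Dq q = 0")
  case True
  then show ?thesis
    using assms(3) by (simp add: Omega_def)
next
  case False
  then show ?thesis
    using matrix_inv_acoustic_tensor_mult[OF assms(1,2) False]
    by (simp add: Omega_def Mq_eq_acoustic_tensor acoustic_tensor_mult[OF minor_major_sym_ctensor[OF assms(1)]])
qed

lemma dft_mat_taum_eq_sigm:
  assumes N: "0 < N1" "0 < N2" "0 < N3" and q: "q \<in> QN N1 N2 N3" and "Dq q \<noteq> 0"
    and u: "lattice_periodic_on Pgrid N1 N2 N3 u"
  shows "dft_mat Sgrid N1 N2 N3 (taum 1 lam lam0 eps0 ebar u) q = dft_mat Sgrid N1 N2 N3 (sigm 1 lam eps0 ebar u) q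
      - contr (ctensor lam0) (symprod (Dq q) (dft_vec Pgrid N1 N2 N3 u q))"
    and "dft_mat Sgrid N1 N2 N3 (taum 2 lam lam0 eps0 ebar u) q = dft_mat Sgrid N1 N2 N3 (sigm 2 lam eps0 ebar u) q
      + contr (ctensor lam0) (symprod (cvec (Dq q)) (dft_vec Pgrid N1 N2 N3 u q))"
proof -
  have "q \<noteq> 0"
    using \<open>Dq q \<noteq> 0\<close> Dq_0 by auto
  note eps = dft_mat_epsm[OF N q this]
  show "dft_mat Sgrid N1 N2 N3 (taum 1 lam lam0 eps0 ebar u) q = dft_mat Sgrid N1 N2 N3 (sigm 1 lam eps0 ebar u) q
      - contr (ctensor lam0) (symprod (Dq q) (dft_vec Pgrid N1 N2 N3 u q))"
    unfolding dft_mat_taum eps dft_mat_deps_1[OF N q u] ..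
  show "dft_mat Sgrid N1 N2 N3 (taum 2 lam lam0 eps0 ebar u) q = dft_mat Sgrid N1 N2 N3 (sigm 2 lam eps0 ebar u) q
      + contr (ctensor lam0) (symprod (cvec (Dq q)) (dft_vec Pgrid N1 N2 N3 u q))"
    unfolding dft_mat_taum eps dft_mat_deps_2[OF N q u] contr_uminus by simp
qed

theorem mainTheorem6:
  fixes N1 N2 N3 :: nat
    and lam :: "real^3 \<Rightarrow> tensor4" and lam0 :: tensor4
    and eps0 :: "real^3 \<Rightarrow> real^3^3" and ebar :: "real^3^3"
    and u :: "real^3 \<Rightarrow> real^3"
  assumes N_pos: "0 < N1" "0 < N2" "0 < N3"
    and N_even: "even N1" "even N2" "even N3"
    and ebar_sym: "transpose ebar = ebar"
    and lam_sym: "\<forall>r\<in>Sgrid. minor_major_sym (lam r)"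
    and lam_per: "lattice_periodic_on Sgrid N1 N2 N3 lam"
    and eps0_sym: "\<forall>r\<in>Sgrid. transpose (eps0 r) = eps0 r"
    and eps0_per: "lattice_periodic_on Sgrid N1 N2 N3 eps0"
    and lam0_sym: "minor_major_sym lam0"
    and lam0_pd: "pos_def_sym lam0"
    and u_per: "lattice_periodic_on Pgrid N1 N2 N3 u"
    and u0: "dft_vec Pgrid N1 N2 N3 u 0 = 0"
    and upi: "dft_vec Pgrid N1 N2 N3 u (vector [pi, pi, pi]) = 0"
  shows
    "(\<forall>q\<in>QN N1 N2 N3.
        Omega lam0 q *v (- (dft_mat Sgrid N1 N2 N3 (taum 1 lam lam0 eps0 ebar u) q *v cvec (Dq q))
                         + dft_mat Sgrid N1 N2 N3 (taum 2 lam lam0 eps0 ebar u) q *v Dq q)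
        = dft_vec Pgrid N1 N2 N3 u q
          - Omega lam0 q *v (dft_mat Sgrid N1 N2 N3 (sigm 1 lam eps0 ebar u) q *v cvec (Dq q)
                             - dft_mat Sgrid N1 N2 N3 (sigm 2 lam eps0 ebar u) q *v Dq q))
     \<and> (\<forall>q\<in>QN N1 N2 N3. \<forall>v::complex^3. (Dq q = 0 \<longrightarrow> v = 0) \<longrightarrow>
        Omega lam0 q *v (contr (ctensor lam0) (symprod (Dq q) v) *v cvec (Dq q)
                         + contr (ctensor lam0) (symprod (cvec (Dq q)) v) *v Dq q) = v)"
proof (intro conjI ballI allI impI)
  fix q assume q: "q \<in> QN N1 N2 N3"
  let ?C = "ctensor lam0" and ?D = "Dq q" and ?U = "dft_vec Pgrid N1 N2 N3 u q"
  let ?S1 = "dft_mat Sgrid N1 N2 N3 (sigm 1 lam eps0 ebar u) q" and ?S2 = "dft_mat Sgrid N1 N2 N3 (sigm 2 lam eps0 ebar u) q"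
  show "Omega lam0 q *v (- (dft_mat Sgrid N1 N2 N3 (taum 1 lam lam0 eps0 ebar u) q *v cvec ?D)
      + dft_mat Sgrid N1 N2 N3 (taum 2 lam lam0 eps0 ebar u) q *v ?D)
    = ?U - Omega lam0 q *v (?S1 *v cvec ?D - ?S2 *v ?D)"
  proof (cases "?D = 0")
    case True
    then have "?U = 0"
      using Dq_eq_0_imp_QN[OF q] u0 upi by blast
    with True show ?thesis
      by (simp add: Omega_def)
  next
    case False
    have regroup: "- ((?S1 - contr ?C (symprod ?D ?U)) *v cvec ?D) + (?S2 + contr ?C (symprod (cvec ?D) ?U)) *v ?D
        = (contr ?C (symprod ?D ?U) *v cvec ?D + contr ?C (symprod (cvec ?D) ?U) *v ?D) - (?S1 *v cvec ?D - ?S2 *v ?D)"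
      by (simp add: matrix_vector_mult_diff_rdistrib matrix_vector_mult_add_rdistrib algebra_simps)
    have "Omega lam0 q *v (contr ?C (symprod ?D ?U) *v cvec ?D + contr ?C (symprod (cvec ?D) ?U) *v ?D) = ?U"
      using False by (intro Omega_mult_acoustic_tensor[OF lam0_sym lam0_pd]) simp
    then show ?thesis
      unfolding dft_mat_taum_eq_sigm[OF N_pos q False u_per] regroup matrix_vector_mult_diff_distrib by simp
  qed
  show "Omega lam0 q *v (contr ?C (symprod ?D v) *v cvec ?D + contr ?C (symprod (cvec ?D) v) *v ?D) = v"
    if "?D = 0 \<longrightarrow> v = 0" for v
    using Omega_mult_acoustic_tensor[OF lam0_sym lam0_pd that] .
qed

end
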